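(* Let $(\mathcal{O},g,f)$ be an oriented matroid program and let $\mathcal{O}'=\mathcal{O}\cup p$ be a nontrivial single-element extension of $\mathcal{O}$. Let $X,Y$ be old, conformal, comodular cocircuits of $\mathcal{O}'$ with $X_g=Y_g=+$. Then $X\setminus p$ and $Y\setminus p$ are conformal cocircuits of $\mathcal{O}$ with $(X\setminus p)_g=(Y\setminus p)_g=+$. Moreover, $X\setminus p$ and $Y\setminus p$ are comodular in $\mathcal{O}$ if $(X\circ Y)_p\neq 0$ or if $\mathcal{O}\cup p$ is a principal extension.
   Context: Oriented matroid $\mathcal{O}$ of rank $r$ on finite $E$, given by its cocircuits (sign vectors in $\{+,-,0\}^E$), underlying matroid $\mathcal{M}(\mathcal{O})$. Notation: $z(X)$ zero set, $\operatorname{sep}(X,Y)=\{e:X_e=-Y_e\ne0\}$, $(X\circ Y)_e=X_e$ if $X_e\ne0$, else $Y_e$; conformal means $\operatorname{sep}=\emptyset$. An edge is a covector whose zero set is a flat of rank $r-2$; cocircuits $X\ne\pm Y$ are comodular if $X\circ Y$ is an edge. An oriented matroid program $(\mathcal{O},g,f)$: $g\neq f\in E$, $g$ not a loop, $f$ not a coloop. A single-element extension $\mathcal{O}'=\mathcal{O}\cup p$ is determined by a localization $\sigma$ from cocircuits of $\mathcal{O}$ to $\{+,-,0\}$; its cocircuits are the old cocircuits $(Y,\sigma(Y))$, $Y$ a cocircuit of $\mathcal{O}$, and the new cocircuits $(Y^1\circ Y^2,0)$ with $Y^1,Y^2$ conformal comodular cocircuits of $\mathcal{O}$ with $\sigma(Y^1)=-\sigma(Y^2)\ne0$.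 $X\setminus p$ denotes restriction to $E$. The extension is nontrivial if $p$ is not a coloop. It is principal if there is a flat $A$ of $\mathcal{M}(\mathcal{O})$ such that for every flat $F$ of $\mathcal{M}(\mathcal{O})$, $p\in\operatorname{cl}_{\mathcal{M}(\mathcal{O}')}(F)$ iff $A\subseteq F$. *)

theory Defs
  imports Main
begin

datatype sign = Pos | Neg | Zer

fun negsign :: "sign \<Rightarrow> sign" where
  "negsign Pos = Neg" | "negsign Neg = Pos" | "negsign Zer = Zer"

type_synonym 'a signvec = "'a \<Rightarrow> sign"

text \<open>Sign vectors are total functions; those of an oriented matroid on E are Zer outside E.\<close>

definition zerovec :: "'a signvec" where "zerovec = (\<lambda>_. Zer)"

definition negv :: "'a signvec \<Rightarrow> 'a signvec" where
  "negv X = (\<lambda>e. negsign (X e))"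

definition supp :: "'a signvec \<Rightarrow> 'a set" where
  "supp X = {e. X e \<noteq> Zer}"

definition zset :: "'a set \<Rightarrow> 'a signvec \<Rightarrow> 'a set" where
  "zset E X = {e \<in> E. X e = Zer}"

definition sep :: "'a signvec \<Rightarrow> 'a signvec \<Rightarrow> 'a set" where
  "sep X Y = {e. X e \<noteq> Zer \<and> X e = negsign (Y e)}"

definition comp :: "'a signvec \<Rightarrow> 'a signvec \<Rightarrow> 'a signvec" where
  "comp X Y = (\<lambda>e. if X e \<noteq> Zer then X e else Y e)"

definition conformal :: "'a signvec \<Rightarrow> 'a signvec \<Rightarrow> bool" where
  "conformal X Y \<longleftrightarrow> sep X Y = {}"

text \<open>Restriction to E when p is removed: X \ p.\<close>
definition delp :: "'a \<Rightarrow> 'a signvec \<Rightarrow> 'a signvec" where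
  "delp p X = X(p := Zer)"

definition is_OM :: "'a set \<Rightarrow> 'a signvec set \<Rightarrow> bool" where
  "is_OM E C \<longleftrightarrow>
     finite E \<and>
     (\<forall>X\<in>C. supp X \<subseteq> E) \<and>
     zerovec \<notin> C \<and>
     (\<forall>X\<in>C. negv X \<in> C) \<and>
     (\<forall>X\<in>C. \<forall>Y\<in>C. supp X \<subseteq> supp Y \<longrightarrow> X = Y \<or> X = negv Y) \<and>
     (\<forall>X\<in>C. \<forall>Y\<in>C. \<forall>e. X \<noteq> negv Y \<and> e \<in> sep X Y \<longrightarrow>
        (\<exists>Z\<in>C. Z e = Zer \<and>
           (\<forall>f. Z f = Pos \<longrightarrow> X f = Pos \<or> Y f = Pos) \<and>
           (\<forall>f. Z f = Neg \<longrightarrow> X f = Neg \<or> Y f = Neg)))"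

inductive_set covectors :: "'a signvec set \<Rightarrow> 'a signvec set" for C where
  cov_zero: "zerovec \<in> covectors C"
| cov_comp: "X \<in> C \<Longrightarrow> V \<in> covectors C \<Longrightarrow> comp X V \<in> covectors C"

definition hyperplanes :: "'a set \<Rightarrow> 'a signvec set \<Rightarrow> 'a set set" where
  "hyperplanes E C = {zset E X | X. X \<in> C}"

definition mcl :: "'a set \<Rightarrow> 'a signvec set \<Rightarrow> 'a set \<Rightarrow> 'a set" where
  "mcl E C A = {e \<in> E. \<forall>H \<in> hyperplanes E C. A \<subseteq> H \<longrightarrow> e \<in> H}"

definition mindep :: "'a set \<Rightarrow> 'a signvec set \<Rightarrow> 'a set \<Rightarrow> bool" where
  "mindep E C I \<longleftrightarrow> I \<subseteq> E \<and> (\<forall>e\<in>I. e \<notin> mcl E C (I - {e}))"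

definition mrank :: "'a set \<Rightarrow> 'a signvec set \<Rightarrow> 'a set \<Rightarrow> nat" where
  "mrank E C A = Max {card I | I. I \<subseteq> A \<and> mindep E C I}"

definition om_rank :: "'a set \<Rightarrow> 'a signvec set \<Rightarrow> nat" where
  "om_rank E C = mrank E C E"

definition is_flat :: "'a set \<Rightarrow> 'a signvec set \<Rightarrow> 'a set \<Rightarrow> bool" where
  "is_flat E C F \<longleftrightarrow> F \<subseteq> E \<and> mcl E C F = F"

definition is_loop :: "'a set \<Rightarrow> 'a signvec set \<Rightarrow> 'a \<Rightarrow> bool" where
  "is_loop E C e \<longleftrightarrow> e \<in> mcl E C {}"

definition is_coloop :: "'a set \<Rightarrow> 'a signvec set \<Rightarrow> 'a \<Rightarrow> bool" where
  "is_coloop E C e \<longleftrightarrow> e \<in> E \<and> e \<notin> mcl E C (E - {e})"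

definition is_edge :: "'a set \<Rightarrow> 'a signvec set \<Rightarrow> 'a signvec \<Rightarrow> bool" where
  "is_edge E C V \<longleftrightarrow> V \<in> covectors C \<and> is_flat E C (zset E V) \<and>
     int (mrank E C (zset E V)) = int (om_rank E C) - 2"

definition comodular :: "'a set \<Rightarrow> 'a signvec set \<Rightarrow> 'a signvec \<Rightarrow> 'a signvec \<Rightarrow> bool" where
  "comodular E C X Y \<longleftrightarrow> X \<in> C \<and> Y \<in> C \<and> X \<noteq> Y \<and> X \<noteq> negv Y \<and> is_edge E C (comp X Y)"

definition om_program :: "'a set \<Rightarrow> 'a signvec set \<Rightarrow> 'a \<Rightarrow> 'a \<Rightarrow> bool" where
  "om_program E C g f \<longleftrightarrow> is_OM E C \<and> g \<in> E \<and> f \<in> E \<and> g \<noteq> f \<and>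
     \<not> is_loop E C g \<and> \<not> is_coloop E C f"

definition deletion_cocircuits :: "'a \<Rightarrow> 'a signvec set \<Rightarrow> 'a signvec set" where
  "deletion_cocircuits p C' =
     {V \<in> delp p ` C'. V \<noteq> zerovec \<and>
        (\<forall>W \<in> delp p ` C'. W \<noteq> zerovec \<longrightarrow> supp W \<subseteq> supp V \<longrightarrow> supp W = supp V)}"

definition single_elem_ext :: "'a set \<Rightarrow> 'a signvec set \<Rightarrow> 'a \<Rightarrow> 'a signvec set \<Rightarrow> bool" where
  "single_elem_ext E C p C' \<longleftrightarrow> p \<notin> E \<and> is_OM (insert p E) C' \<and> deletion_cocircuits p C' = C"

text \<open>Old cocircuits of O' are those of the form (Y, sigma(Y)), i.e. whose restriction is a cocircuit of O.\<close>
definition old_cocircuit :: "'a signvec set \<Rightarrow> 'a \<Rightarrow> 'a signvec set \<Rightarrow> 'a signvec \<Rightarrow> bool" where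
  "old_cocircuit C p C' X \<longleftrightarrow> X \<in> C' \<and> delp p X \<in> C"

definition principal_ext :: "'a set \<Rightarrow> 'a signvec set \<Rightarrow> 'a \<Rightarrow> 'a signvec set \<Rightarrow> bool" where
  "principal_ext E C p C' \<longleftrightarrow>
     (\<exists>A. is_flat E C A \<and>
        (\<forall>F. is_flat E C F \<longrightarrow> (p \<in> mcl (insert p E) C' F \<longleftrightarrow> A \<subseteq> F)))"

end

theory Submission imports Defs begin

text \<open>Conformality and the signs at g pass to restrictions directly, and distinct, non-opposite
  conformal cocircuits of O' cannot have the same restriction. For comodularity, the zero set F of
  (X \ p) \<circ> (Y \ p) is an intersection of two hyperplanes of O, hence a flat. The cocircuits of O
  are the support-minimal restrictions of those of O', so closures and ranks of subsets of E agree
  in O and O'; as p is not a coloop the total ranks agree as well. The zero set of X \<circ> Y in O'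
  is F or F + p. In the latter case p lies in the closures of both hyperplanes z(X \ p) and
  z(Y \ p); for a principal extension with flat A this puts A inside both, hence inside F, so p is
  in the closure of F and F + p has the rank of F.\<close>

lemma negsign_negsign [simp]: "negsign (negsign s) = s"
  by (cases s) simp_all

lemma negv_negv [simp]: "negv (negv X) = X"
  by (simp add: negv_def)

lemma supp_negv [simp]: "supp (negv X) = supp X"
  by (auto simp: supp_def negv_def elim: negsign.elims)

lemma supp_delp: "supp (delp p X) = supp X - {p}"
  by (auto simp: supp_def delp_def)

lemma supp_eq_empty_iff: "supp X = {} \<longleftrightarrow> X = zerovec"
  by (auto simp: supp_def zerovec_def)

lemma zset_eq_Diff_supp: "supp X \<subseteq> S \<Longrightarrow> zset S X = S - supp X"
  by (auto simp: supp_def zset_def)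

lemma comp_delp: "comp (delp p X) (delp p Y) = delp p (comp X Y)"
  by (auto simp: comp_def delp_def)

lemma conformal_delp: "conformal X Y \<Longrightarrow> conformal (delp p X) (delp p Y)"
  by (auto simp: conformal_def sep_def delp_def)

lemma comp_zerovec [simp]: "comp X zerovec = X"
  by (auto simp: comp_def zerovec_def)

lemma comp_mem_covectors: "X \<in> C \<Longrightarrow> Y \<in> C \<Longrightarrow> comp X Y \<in> covectors C"
  using covectors.cov_comp[OF _ covectors.cov_comp[OF _ covectors.cov_zero], of X C Y] by simp

lemma OM_finite: "is_OM S C \<Longrightarrow> finite S"
  unfolding is_OM_def by (elim conjE)

lemma OM_supp_subset: "is_OM S C \<Longrightarrow> X \<in> C \<Longrightarrow> supp X \<subseteq> S"
  unfolding is_OM_def by (elim conjE) blast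

lemma OM_negv: "is_OM S C \<Longrightarrow> X \<in> C \<Longrightarrow> negv X \<in> C"
  unfolding is_OM_def by (elim conjE) blast

lemma OM_eq_or_negv_of_supp_subset:
  "is_OM S C \<Longrightarrow> X \<in> C \<Longrightarrow> Y \<in> C \<Longrightarrow> supp X \<subseteq> supp Y \<Longrightarrow> X = Y \<or> X = negv Y"
  unfolding is_OM_def by (elim conjE) blast

lemma OM_supp_eq_of_subset:
  "is_OM S C \<Longrightarrow> X \<in> C \<Longrightarrow> Y \<in> C \<Longrightarrow> supp X \<subseteq> supp Y \<Longrightarrow> supp X = supp Y"
  using OM_eq_or_negv_of_supp_subset by fastforce

lemma OM_elimination:
  assumes "is_OM S C" "X \<in> C" "Y \<in> C" "X \<noteq> negv Y" "e \<in> sep X Y"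
  obtains Z where "Z \<in> C" "Z e = Zer"
    "\<And>f. Z f = Pos \<Longrightarrow> X f = Pos \<or> Y f = Pos" "\<And>f. Z f = Neg \<Longrightarrow> X f = Neg \<or> Y f = Neg"
  using assms unfolding is_OM_def by metis

lemma OM_weak_supp_elimination:
  assumes om: "is_OM S C" and XC: "X \<in> C" and YC: "Y \<in> C" and ne: "supp X \<noteq> supp Y"
    and x: "x \<in> supp X" "x \<in> supp Y"
  shows "\<exists>Z\<in>C. supp Z \<subseteq> supp X \<union> supp Y - {x}"
proof -
  obtain Y' where Y': "Y' \<in> C" "supp Y' = supp Y" "x \<in> sep X Y'"
  proof (cases "X x = negsign (Y x)")
    case True
    then show ?thesis using that[of Y] YC x by (auto simp: sep_def supp_def)
  next
    case False
    then have "x \<in> sep X (negv Y)"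
      using x by (cases "X x"; cases "Y x") (auto simp: sep_def supp_def negv_def)
    then show ?thesis by (rule that[OF OM_negv[OF om YC] supp_negv])
  qed
  have "X \<noteq> negv Y'" using ne Y'(2) supp_negv by metis
  then obtain Z where Z: "Z \<in> C" "Z x = Zer"
    "\<And>f. Z f = Pos \<Longrightarrow> X f = Pos \<or> Y' f = Pos" "\<And>f. Z f = Neg \<Longrightarrow> X f = Neg \<or> Y' f = Neg"
    using OM_elimination[OF om XC Y'(1) _ Y'(3)] by blast
  have "supp Z \<subseteq> supp X \<union> supp Y' - {x}"
  proof
    fix f assume "f \<in> supp Z"
    then show "f \<in> supp X \<union> supp Y' - {x}"
      using Z(2) Z(3)[of f] Z(4)[of f] by (cases "Z f") (auto simp: supp_def)
  qed
  then show ?thesis using Z(1) Y'(2) by auto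
qed

text \<open>Strong elimination follows from weak elimination in any clutter of subsets of a finite set
  (the circuit axioms of a matroid), by induction on the size of the union.\<close>

lemma clutter_strong_elimination:
  assumes fin: "finite S" and sub: "\<forall>D\<in>DD. D \<subseteq> S"
    and clutter: "\<forall>D1\<in>DD. \<forall>D2\<in>DD. D1 \<subseteq> D2 \<longrightarrow> D1 = D2"
    and weak: "\<forall>D1\<in>DD. \<forall>D2\<in>DD. \<forall>x. D1 \<noteq> D2 \<and> x \<in> D1 \<and> x \<in> D2 \<longrightarrow> (\<exists>D3\<in>DD. D3 \<subseteq> D1 \<union> D2 - {x})"
  shows "D1 \<in> DD \<Longrightarrow> D2 \<in> DD \<Longrightarrow> x \<in> D1 \<Longrightarrow> x \<in> D2 \<Longrightarrow> y \<in> D1 \<Longrightarrow> y \<notin> D2 \<Longrightarrow>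
     \<exists>D3\<in>DD. y \<in> D3 \<and> x \<notin> D3 \<and> D3 \<subseteq> D1 \<union> D2"
proof (induction "card (D1 \<union> D2)" arbitrary: D1 D2 x y rule: less_induct)
  case less
  have finU: "finite (D1 \<union> D2)" using sub less.prems fin by (meson finite_subset le_sup_iff)
  have "D1 \<noteq> D2" using less.prems by blast
  then obtain D3 where D3: "D3 \<in> DD" "D3 \<subseteq> D1 \<union> D2 - {x}" using weak less.prems by blast
  show ?case
  proof (cases "y \<in> D3")
    case True
    then show ?thesis using D3 by blast
  next
    case False
    have "\<not> D3 \<subseteq> D1" using clutter D3 less.prems by blast
    then obtain g where g: "g \<in> D3" "g \<notin> D1" "g \<in> D2" using D3 by blast
    have "card (D2 \<union> D3) < card (D1 \<union> D2)"
      by (rule psubset_card_mono[OF finU]) (use D3 less.prems False in blast)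
    then obtain D4 where D4: "D4 \<in> DD" "x \<in> D4" "g \<notin> D4" "D4 \<subseteq> D2 \<union> D3"
      using less.hyps[OF _ less.prems(2) D3(1) g(3,1) less.prems(4)] D3 by blast
    have "card (D1 \<union> D4) < card (D1 \<union> D2)"
      by (rule psubset_card_mono[OF finU]) (use D3 D4 g in blast)
    moreover have "y \<notin> D4" using D4 False less.prems by blast
    ultimately obtain D5 where "D5 \<in> DD" "y \<in> D5" "x \<notin> D5" "D5 \<subseteq> D1 \<union> D4"
      using less.hyps[OF _ less.prems(1) D4(1) less.prems(3) D4(2) less.prems(5)] by blast
    then show ?thesis using D4 D3 by blast
  qed
qed

lemma OM_strong_supp_elimination:
  assumes om: "is_OM S C" and XY: "X \<in> C" "Y \<in> C"
    and xy: "x \<in> supp X" "x \<in> supp Y" "y \<in> supp X" "y \<notin> supp Y"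
  shows "\<exists>Z\<in>C. y \<in> supp Z \<and> x \<notin> supp Z \<and> supp Z \<subseteq> supp X \<union> supp Y"
proof -
  have clutter: "\<forall>D1\<in>supp ` C. \<forall>D2\<in>supp ` C. D1 \<subseteq> D2 \<longrightarrow> D1 = D2"
  proof (intro ballI impI)
    fix D1 D2 assume "D1 \<in> supp ` C" "D2 \<in> supp ` C" "D1 \<subseteq> D2"
    then show "D1 = D2" using OM_supp_eq_of_subset[OF om] by (elim imageE) metis
  qed
  have weak: "\<forall>D1\<in>supp ` C. \<forall>D2\<in>supp ` C. \<forall>x. D1 \<noteq> D2 \<and> x \<in> D1 \<and> x \<in> D2 \<longrightarrow>
      (\<exists>D3\<in>supp ` C. D3 \<subseteq> D1 \<union> D2 - {x})"
  proof (intro ballI allI impI)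
    fix D1 D2 x assume "D1 \<in> supp ` C" "D2 \<in> supp ` C" "D1 \<noteq> D2 \<and> x \<in> D1 \<and> x \<in> D2"
    then show "\<exists>D3\<in>supp ` C. D3 \<subseteq> D1 \<union> D2 - {x}"
      using OM_weak_supp_elimination[OF om] by (elim imageE conjE) (metis image_eqI)
  qed
  have "\<forall>D\<in>supp ` C. D \<subseteq> S" using OM_supp_subset[OF om] by blast
  from clutter_strong_elimination[OF OM_finite[OF om] this clutter weak
      imageI[OF XY(1)] imageI[OF XY(2)] xy]
  obtain D where "D \<in> supp ` C" "y \<in> D" "x \<notin> D" "D \<subseteq> supp X \<union> supp Y" by blast
  then show ?thesis by blast
qed

lemma mcl_iff:
  assumes sub: "\<And>X. X \<in> C \<Longrightarrow> supp X \<subseteq> S" and A: "A \<subseteq> S"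
  shows "e \<in> mcl S C A \<longleftrightarrow> e \<in> S \<and> (\<forall>X\<in>C. A \<inter> supp X = {} \<longrightarrow> e \<notin> supp X)"
proof -
  have "e \<in> mcl S C A \<longleftrightarrow> e \<in> S \<and> (\<forall>X\<in>C. A \<subseteq> zset S X \<longrightarrow> e \<in> zset S X)"
    unfolding mcl_def hyperplanes_def by blast
  also have "\<dots> \<longleftrightarrow> e \<in> S \<and> (\<forall>X\<in>C. A \<inter> supp X = {} \<longrightarrow> e \<notin> supp X)"
    using zset_eq_Diff_supp[OF sub] A by (intro conj_cong ball_cong refl) blast+
  finally show ?thesis .
qed

lemma OM_mcl_iff:
  "is_OM S C \<Longrightarrow> A \<subseteq> S \<Longrightarrow>
    e \<in> mcl S C A \<longleftrightarrow> e \<in> S \<and> (\<forall>X\<in>C. A \<inter> supp X = {} \<longrightarrow> e \<notin> supp X)"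
  by (rule mcl_iff[OF OM_supp_subset])

lemma mcl_mono: "A \<subseteq> B \<Longrightarrow> mcl S C A \<subseteq> mcl S C B"
  unfolding mcl_def by blast

lemma subset_mcl: "A \<subseteq> S \<Longrightarrow> A \<subseteq> mcl S C A"
  unfolding mcl_def by blast

lemma mcl_subset_mcl: "A \<subseteq> mcl S C B \<Longrightarrow> mcl S C A \<subseteq> mcl S C B"
  unfolding mcl_def by blast

lemma mcl_exchange:
  assumes om: "is_OM S C" and A: "A \<subseteq> S" and f: "f \<in> S" and e: "e \<in> S"
    and e_in: "e \<in> mcl S C (insert f A)" and e_notin: "e \<notin> mcl S C A"
  shows "f \<in> mcl S C (insert e A)"
proof (rule ccontr)
  have closed: "\<forall>X\<in>C. insert f A \<inter> supp X = {} \<longrightarrow> e \<notin> supp X"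
    using e_in OM_mcl_iff[OF om, of "insert f A"] A f by blast
  obtain X where X: "X \<in> C" "A \<inter> supp X = {}" "e \<in> supp X"
    using e_notin OM_mcl_iff[OF om A] e by blast
  then have fX: "f \<in> supp X" using closed by blast
  assume "f \<notin> mcl S C (insert e A)"
  then obtain Y where Y: "Y \<in> C" "insert e A \<inter> supp Y = {}" "f \<in> supp Y"
    using OM_mcl_iff[OF om, of "insert e A"] A e f by blast
  obtain Z where "Z \<in> C" "e \<in> supp Z" "f \<notin> supp Z" "supp Z \<subseteq> supp X \<union> supp Y"
    using OM_strong_supp_elimination[OF om X(1) Y(1) fX Y(3) X(3)] Y(2) by blast
  then show False using closed X Y by blast
qed

lemma mindep_subset: "mindep S C I \<Longrightarrow> J \<subseteq> I \<Longrightarrow> mindep S C J"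
  unfolding mindep_def using mcl_mono[of "J - _" "I - _" S C] by blast

lemma mindep_insert:
  assumes om: "is_OM S C" and J: "mindep S C J" and x: "x \<in> S" "x \<notin> mcl S C J"
  shows "mindep S C (insert x J)"
  unfolding mindep_def
proof (intro conjI ballI)
  have JS: "J \<subseteq> S" using J unfolding mindep_def by blast
  then show "insert x J \<subseteq> S" using x by blast
  have xJ: "x \<notin> J" using x subset_mcl[OF JS] by blast
  fix y assume y: "y \<in> insert x J"
  show "y \<notin> mcl S C (insert x J - {y})"
  proof (cases "y = x")
    case True
    then show ?thesis using x xJ by (simp add: insert_absorb)
  next
    case False
    then have yJ: "y \<in> J" and eq: "insert x J - {y} = insert x (J - {y})" using y by blast+
    have "y \<notin> mcl S C (J - {y})" using J yJ unfolding mindep_def by blast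
    moreover have "x \<notin> mcl S C (insert y (J - {y}))" using x(2) yJ by (simp add: insert_absorb)
    moreover have "J - {y} \<subseteq> S" "y \<in> S" using JS yJ by blast+
    ultimately show ?thesis using mcl_exchange[OF om _ x(1), of "J - {y}" y] eq by auto
  qed
qed

lemma mindep_exchange_into_closure:
  assumes om: "is_OM S C" and T: "T \<subseteq> S" and pc: "p \<in> mcl S C T"
    and I: "mindep S C I" "I \<subseteq> insert p T"
  shows "\<exists>J. J \<subseteq> T \<and> mindep S C J \<and> card J = card I"
proof (cases "p \<in> I")
  case False
  then show ?thesis using I by blast
next
  case True
  define J where "J = I - {p}"
  have J: "mindep S C J" using mindep_subset[OF I(1)] unfolding J_def by blast
  have "p \<notin> mcl S C J" using I(1) True unfolding mindep_def J_def by blast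
  then obtain x where x: "x \<in> T" "x \<notin> mcl S C J"
    using pc mcl_subset_mcl[of T S C J] by blast
  have IS: "I \<subseteq> S" using I(1) unfolding mindep_def by blast
  have xS: "x \<in> S" using x(1) T by blast
  have "x \<notin> J" using x(2) subset_mcl[of J S C] IS unfolding J_def by blast
  moreover have "finite I" using IS OM_finite[OF om] by (rule finite_subset)
  ultimately have "card (insert x J) = card I"
    using True card_Suc_Diff1[of I p] unfolding J_def by simp
  moreover have "insert x J \<subseteq> T" using x(1) I(2) unfolding J_def by blast
  ultimately show ?thesis using mindep_insert[OF om J xS x(2)] by blast
qed

lemma mrank_insert_mem_mcl:
  assumes "is_OM S C" and "T \<subseteq> S" and "p \<in> mcl S C T"
  shows "mrank S C (insert p T) = mrank S C T"
proof -
  have "{card I | I. I \<subseteq> insert p T \<and> mindep S C I} = {card I | I. I \<subseteq> T \<and> mindep S C I}"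
  proof (intro subset_antisym subsetI)
    fix n assume "n \<in> {card I | I. I \<subseteq> insert p T \<and> mindep S C I}"
    then obtain I where I: "n = card I" "mindep S C I" "I \<subseteq> insert p T" by blast
    from mindep_exchange_into_closure[OF assms I(2,3)]
    obtain J where "J \<subseteq> T" "mindep S C J" "card J = n" using I(1) by blast
    then show "n \<in> {card I | I. I \<subseteq> T \<and> mindep S C I}" by blast
  next
    fix n assume "n \<in> {card I | I. I \<subseteq> T \<and> mindep S C I}"
    then show "n \<in> {card I | I. I \<subseteq> insert p T \<and> mindep S C I}" by blast
  qed
  then show ?thesis unfolding mrank_def by simp
qed

lemma single_elem_extD:
  assumes "single_elem_ext E C p C'"
  shows "p \<notin> E" "is_OM (insert p E) C'" "deletion_cocircuits p C' = C"
  using assms unfolding single_elem_ext_def by blast+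

lemma deletion_cocircuitsE:
  assumes "V \<in> deletion_cocircuits p C'"
  obtains Z where "Z \<in> C'" "V = delp p Z"
  using assms unfolding deletion_cocircuits_def by blast

lemma single_elem_ext_supp_subset:
  assumes ext: "single_elem_ext E C p C'" and V: "V \<in> C"
  shows "supp V \<subseteq> E"
proof -
  obtain Z where "Z \<in> C'" "V = delp p Z"
    using V single_elem_extD(3)[OF ext] deletion_cocircuitsE by metis
  then show ?thesis
    using OM_supp_subset[OF single_elem_extD(2)[OF ext], of Z] supp_delp[of p Z] by auto
qed

lemma OM_shrink_restricted_supp:
  assumes om: "is_OM S C" and Z: "Z \<in> C" "e \<in> supp Z"
    and W: "W \<in> C" "e \<notin> supp W" "f \<in> supp W - {p}" "supp W - {p} \<subseteq> supp Z - {p}"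
  shows "\<exists>V\<in>C. e \<in> supp V \<and> supp V - {p} \<subset> supp Z - {p}"
proof -
  have "f \<in> supp Z" using W(3,4) by blast
  then obtain V where "V \<in> C" "e \<in> supp V" "f \<notin> supp V" "supp V \<subseteq> supp Z \<union> supp W"
    using OM_strong_supp_elimination[OF om Z(1) W(1) _ _ Z(2) W(2)] W(3) by blast
  then show ?thesis using W(3,4) by blast
qed

text \<open>A cocircuit Z0 of O' through e whose support minus p is as small as possible restricts to a
  cocircuit of O: otherwise strong elimination would shrink it further.\<close>

lemma exists_deletion_cocircuit:
  assumes om: "is_OM S C'" and ZC: "Z \<in> C'" and eZ: "e \<in> supp Z" and ep: "e \<noteq> p"
  shows "\<exists>W \<in> deletion_cocircuits p C'. e \<in> supp W \<and> supp W \<subseteq> supp Z - {p}"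
proof -
  define P where "P = (\<lambda>Z'. Z' \<in> C' \<and> e \<in> supp Z' \<and> supp Z' - {p} \<subseteq> supp Z - {p})"
  define m where "m = (\<lambda>Z'::'a signvec. card (supp Z' - {p}))"
  have "P Z" unfolding P_def using ZC eZ by blast
  then obtain Z0 where Z0: "P Z0" and least: "\<And>Y. P Y \<Longrightarrow> m Z0 \<le> m Y"
    using ex_has_least_nat[of P Z m] by blast
  have Z0C: "Z0 \<in> C'" and eZ0: "e \<in> supp Z0" and Z0s: "supp Z0 - {p} \<subseteq> supp Z - {p}"
    using Z0 unfolding P_def by blast+
  have fin: "finite (supp Z0 - {p})"
    using OM_supp_subset[OF om Z0C] finite_subset[OF _ OM_finite[OF om]] by blast
  have sd: "supp (delp p Z0) = supp Z0 - {p}" by (rule supp_delp)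
  have "delp p Z0 \<in> deletion_cocircuits p C'"
    unfolding deletion_cocircuits_def
  proof (intro CollectI conjI ballI impI)
    show "delp p Z0 \<in> delp p ` C'" using Z0C by (rule imageI)
    show "delp p Z0 \<noteq> zerovec" using eZ0 ep sd supp_eq_empty_iff[of "delp p Z0"] by blast
  next
    fix W assume W: "W \<in> delp p ` C'" "W \<noteq> zerovec" "supp W \<subseteq> supp (delp p Z0)"
    from W(1) obtain Z3 where Z3: "Z3 \<in> C'" "W = delp p Z3" by blast
    have sW: "supp W = supp Z3 - {p}" using Z3(2) supp_delp by simp
    show "supp W = supp (delp p Z0)"
    proof (cases "e \<in> supp W")
      case True
      then have "P Z3" unfolding P_def using Z3(1) sW W(3) sd Z0s by blast
      then have "card (supp Z0 - {p}) \<le> card (supp W)" using least sW unfolding m_def by simp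
      then show ?thesis using card_seteq[OF fin] W(3) sd by simp
    next
      case False
      obtain f where "f \<in> supp W" using W(2) by (auto simp flip: supp_eq_empty_iff)
      then have f: "f \<in> supp Z3 - {p}" using sW by simp
      have "e \<notin> supp Z3" "supp Z3 - {p} \<subseteq> supp Z0 - {p}" using False W(3) sW sd ep by blast+
      from OM_shrink_restricted_supp[OF om Z0C eZ0 Z3(1) this(1) f this(2)]
      obtain Z4 where Z4: "Z4 \<in> C'" "e \<in> supp Z4" "supp Z4 - {p} \<subset> supp Z0 - {p}" by blast
      then have "P Z4" unfolding P_def using Z0s by blast
      moreover have "m Z4 < m Z0" unfolding m_def using psubset_card_mono[OF fin Z4(3)] .
      ultimately show ?thesis using least by (simp add: leD)
    qed
  qed
  then show ?thesis using eZ0 ep Z0s sd by blast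
qed

lemma mcl_deletion:
  assumes ext: "single_elem_ext E C p C'" and B: "B \<subseteq> E" and e: "e \<in> E"
  shows "e \<in> mcl E C B \<longleftrightarrow> e \<in> mcl (insert p E) C' B"
proof -
  note pE = single_elem_extD(1)[OF ext] and om = single_elem_extD(2)[OF ext]
    and Cd = single_elem_extD(3)[OF ext]
  have "(\<forall>X\<in>C. B \<inter> supp X = {} \<longrightarrow> e \<notin> supp X) \<longleftrightarrow> (\<forall>X\<in>C'. B \<inter> supp X = {} \<longrightarrow> e \<notin> supp X)"
  proof
    assume L: "\<forall>X\<in>C. B \<inter> supp X = {} \<longrightarrow> e \<notin> supp X"
    show "\<forall>X\<in>C'. B \<inter> supp X = {} \<longrightarrow> e \<notin> supp X"
    proof (intro ballI impI notI)
      fix Z assume Z: "Z \<in> C'" "B \<inter> supp Z = {}" "e \<in> supp Z"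
      have "e \<noteq> p" using e pE by blast
      then obtain W where "W \<in> C" "e \<in> supp W" "supp W \<subseteq> supp Z - {p}"
        using exists_deletion_cocircuit[OF om Z(1) Z(3)] Cd by blast
      then show False using L Z(2) by blast
    qed
  next
    assume R: "\<forall>X\<in>C'. B \<inter> supp X = {} \<longrightarrow> e \<notin> supp X"
    show "\<forall>X\<in>C. B \<inter> supp X = {} \<longrightarrow> e \<notin> supp X"
    proof (intro ballI impI)
      fix V assume V: "V \<in> C" "B \<inter> supp V = {}"
      then obtain Z where "Z \<in> C'" "supp V = supp Z - {p}"
        using Cd deletion_cocircuitsE supp_delp by metis
      then show "e \<notin> supp V" using R V(2) B pE by blast
    qed
  qed
  then show ?thesis
    using mcl_iff[OF single_elem_ext_supp_subset[OF ext] B] OM_mcl_iff[OF om, of B] B e by blast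
qed

lemma mindep_deletion:
  assumes ext: "single_elem_ext E C p C'" and I: "I \<subseteq> E"
  shows "mindep E C I \<longleftrightarrow> mindep (insert p E) C' I"
  using mcl_deletion[OF ext, of "I - {_}"] I unfolding mindep_def by blast

lemma mrank_deletion:
  assumes ext: "single_elem_ext E C p C'" and T: "T \<subseteq> E"
  shows "mrank E C T = mrank (insert p E) C' T"
proof -
  have "{card I | I. I \<subseteq> T \<and> mindep E C I} = {card I | I. I \<subseteq> T \<and> mindep (insert p E) C' I}"
    using mindep_deletion[OF ext] T by blast
  then show ?thesis unfolding mrank_def by simp
qed

lemma noncoloop_mem_mcl:
  assumes "p \<notin> E" and "\<not> is_coloop (insert p E) C' p"
  shows "p \<in> mcl (insert p E) C' E"
  using assms unfolding is_coloop_def by simp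

lemma om_rank_nontrivial_ext:
  assumes ext: "single_elem_ext E C p C'" and nontriv: "\<not> is_coloop (insert p E) C' p"
  shows "om_rank E C = om_rank (insert p E) C'"
proof -
  have "om_rank E C = mrank (insert p E) C' E"
    unfolding om_rank_def by (rule mrank_deletion[OF ext order_refl])
  also have "\<dots> = mrank (insert p E) C' (insert p E)"
    using mrank_insert_mem_mcl[OF single_elem_extD(2)[OF ext] _
        noncoloop_mem_mcl[OF single_elem_extD(1)[OF ext] nontriv]]
    by (simp add: subset_insertI)
  finally show ?thesis unfolding om_rank_def .
qed

lemma is_flat_zset_inter:
  assumes sub: "\<And>X. X \<in> C \<Longrightarrow> supp X \<subseteq> E" and V1: "V1 \<in> C" and V2: "V2 \<in> C"
  shows "is_flat E C (zset E V1 \<inter> zset E V2)"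
proof -
  have "zset E V1 \<in> hyperplanes E C" "zset E V2 \<in> hyperplanes E C"
    unfolding hyperplanes_def using V1 V2 by blast+
  then show ?thesis unfolding is_flat_def mcl_def zset_def by blast
qed

text \<open>If p is not a coloop, it lies in the closure of every old hyperplane z(X \ p) with X_p = 0:
  a cocircuit Z of O' through p avoiding that hyperplane would have Z \ p supported in supp X,
  so by minimality of X \ p (or since p is no coloop if Z \ p = 0) Z = \<plusminus>X, contradicting X_p = 0.\<close>

lemma mem_mcl_zset_old_cocircuit:
  assumes ext: "single_elem_ext E C p C'" and nontriv: "\<not> is_coloop (insert p E) C' p"
    and X: "old_cocircuit C p C' X" and Xp: "X p = Zer"
  shows "p \<in> mcl (insert p E) C' (zset E (delp p X))"
proof -
  note pE = single_elem_extD(1)[OF ext] and om = single_elem_extD(2)[OF ext]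
    and Cd = single_elem_extD(3)[OF ext]
  have XC: "X \<in> C'" and dX: "delp p X \<in> C" using X unfolding old_cocircuit_def by blast+
  have sX: "supp (delp p X) = supp X" using Xp by (auto simp: supp_def delp_def)
  have H: "zset E (delp p X) = E - supp X"
    using zset_eq_Diff_supp[OF single_elem_ext_supp_subset[OF ext dX]] sX by simp
  have "p \<notin> supp Z" if Z: "Z \<in> C'" "zset E (delp p X) \<inter> supp Z = {}" for Z
  proof
    assume pZ: "p \<in> supp Z"
    have "supp Z \<subseteq> insert p E" by (rule OM_supp_subset[OF om Z(1)])
    then have sZX: "supp (delp p Z) \<subseteq> supp (delp p X)"
      using Z(2) H sX unfolding supp_delp by blast
    show False
    proof (cases "delp p Z = zerovec")
      case True
      then have "E \<inter> supp Z = {}" using pE supp_eq_empty_iff[of "delp p Z"] supp_delp[of p Z] by blast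
      moreover have "p \<in> mcl (insert p E) C' E" by (rule noncoloop_mem_mcl[OF pE nontriv])
      ultimately show False using OM_mcl_iff[OF om subset_insertI, of p] Z(1) pZ by blast
    next
      case False
      have "delp p X \<in> deletion_cocircuits p C'" using dX Cd by simp
      then have "supp (delp p Z) = supp (delp p X)"
        using False sZX imageI[OF Z(1), of "delp p"] unfolding deletion_cocircuits_def by blast
      then have "supp X \<subseteq> supp Z" using sX supp_delp[of p Z] by blast
      then have "X = Z \<or> X = negv Z" by (rule OM_eq_or_negv_of_supp_subset[OF om XC Z(1)])
      then show False using Xp pZ by (cases "Z p") (auto simp: negv_def supp_def)
    qed
  qed
  moreover have "zset E (delp p X) \<subseteq> insert p E" by (auto simp: zset_def)
  ultimately show ?thesis using OM_mcl_iff[OF om, of "zset E (delp p X)" p] by blast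
qed

lemma mrank_zset_comp_old_cocircuits:
  assumes ext: "single_elem_ext E C p C'" and nontriv: "\<not> is_coloop (insert p E) C' p"
    and X: "old_cocircuit C p C' X" and Y: "old_cocircuit C p C' Y"
    and hyp: "comp X Y p \<noteq> Zer \<or> principal_ext E C p C'"
  shows "mrank (insert p E) C' (zset (insert p E) (comp X Y))
       = mrank (insert p E) C' (zset E (delp p (comp X Y)))"
proof (cases "comp X Y p = Zer")
  case False
  then have "zset (insert p E) (comp X Y) = zset E (delp p (comp X Y))"
    using single_elem_extD(1)[OF ext] by (auto simp: zset_def delp_def)
  then show ?thesis by simp
next
  case True
  then have Xp: "X p = Zer" and Yp: "Y p = Zer" unfolding comp_def by (auto split: if_splits)
  obtain A where A: "\<And>F. is_flat E C F \<Longrightarrow> p \<in> mcl (insert p E) C' F \<longleftrightarrow> A \<subseteq> F"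
    using hyp True unfolding principal_ext_def by blast
  have dX: "delp p X \<in> C" and dY: "delp p Y \<in> C"
    using X Y unfolding old_cocircuit_def by blast+
  have flat: "is_flat E C (zset E V1 \<inter> zset E V2)" if "V1 \<in> C" "V2 \<in> C" for V1 V2
    using is_flat_zset_inter single_elem_ext_supp_subset[OF ext] that by blast
  have "A \<subseteq> zset E (delp p X)" "A \<subseteq> zset E (delp p Y)"
    using A flat[OF dX dX] flat[OF dY dY]
      mem_mcl_zset_old_cocircuit[OF ext nontriv X Xp] mem_mcl_zset_old_cocircuit[OF ext nontriv Y Yp]
    by simp_all
  moreover have F: "zset E (delp p (comp X Y)) = zset E (delp p X) \<inter> zset E (delp p Y)"
    by (auto simp: zset_def comp_def delp_def)
  ultimately have "p \<in> mcl (insert p E) C' (zset E (delp p (comp X Y)))"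
    using A flat[OF dX dY] by simp
  moreover have "zset (insert p E) (comp X Y) = insert p (zset E (delp p (comp X Y)))"
    using True single_elem_extD(1)[OF ext] by (auto simp: zset_def delp_def)
  moreover have "zset E (delp p (comp X Y)) \<subseteq> insert p E" by (auto simp: zset_def)
  ultimately show ?thesis using mrank_insert_mem_mcl[OF single_elem_extD(2)[OF ext]] by simp
qed

lemma is_edge_delp_comp:
  assumes ext: "single_elem_ext E C p C'" and nontriv: "\<not> is_coloop (insert p E) C' p"
    and X: "old_cocircuit C p C' X" and Y: "old_cocircuit C p C' Y"
    and edge: "is_edge (insert p E) C' (comp X Y)"
    and hyp: "comp X Y p \<noteq> Zer \<or> principal_ext E C p C'"
  shows "is_edge E C (delp p (comp X Y))"
proof -
  have dX: "delp p X \<in> C" and dY: "delp p Y \<in> C"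
    using X Y unfolding old_cocircuit_def by blast+
  have F: "zset E (delp p (comp X Y)) = zset E (delp p X) \<inter> zset E (delp p Y)"
    by (auto simp: zset_def comp_def delp_def)
  have "int (mrank E C (zset E (delp p (comp X Y)))) = int (om_rank E C) - 2"
    using edge mrank_zset_comp_old_cocircuits[OF ext nontriv X Y hyp]
      mrank_deletion[OF ext, of "zset E (delp p (comp X Y))"] om_rank_nontrivial_ext[OF ext nontriv]
    unfolding is_edge_def by (simp add: zset_def)
  then show ?thesis
    unfolding is_edge_def F
    using comp_mem_covectors[OF dX dY] comp_delp[of p X Y]
      is_flat_zset_inter[OF single_elem_ext_supp_subset[OF ext] dX dY]
    by simp
qed

lemma delp_neq_of_conformal:
  assumes om: "is_OM S C" and XC: "X \<in> C" and YC: "Y \<in> C" and conf: "conformal X Y"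
    and XY: "X \<noteq> Y" "X \<noteq> negv Y"
  shows "delp p X \<noteq> delp p Y"
proof
  assume eq: "delp p X = delp p Y"
  then have agree: "\<And>e. e \<noteq> p \<Longrightarrow> X e = Y e" by (metis delp_def fun_upd_other)
  consider "X p = Zer" | "Y p = Zer" | "X p \<noteq> Zer" "Y p \<noteq> Zer" by blast
  then show False
  proof cases
    case 1
    then have "supp X \<subseteq> supp Y" using agree by (force simp: supp_def)
    then show False using OM_eq_or_negv_of_supp_subset[OF om XC YC] XY by blast
  next
    case 2
    then have "supp Y \<subseteq> supp X" using agree by (force simp: supp_def)
    then show False using OM_eq_or_negv_of_supp_subset[OF om YC XC] XY by auto
  next
    case 3
    then have "X p = Y p"
      using conf by (cases "X p"; cases "Y p") (auto simp: conformal_def sep_def dest: spec[of _ p])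
    then show False using agree XY(1) by (metis ext)
  qed
qed

theorem proposition3p3:
  fixes E :: "'a set" and C C' :: "'a signvec set" and g f p :: 'a and X Y :: "'a signvec"
  assumes prog: "om_program E C g f"
    and ext: "single_elem_ext E C p C'"
    and nontriv: "\<not> is_coloop (insert p E) C' p"
    and oldX: "old_cocircuit C p C' X"
    and oldY: "old_cocircuit C p C' Y"
    and conf: "conformal X Y"
    and comod: "comodular (insert p E) C' X Y"
    and Xg: "X g = Pos" and Yg: "Y g = Pos"
  shows "delp p X \<in> C \<and> delp p Y \<in> C \<and> conformal (delp p X) (delp p Y) \<and>
         delp p X g = Pos \<and> delp p Y g = Pos \<and>
         ((comp X Y p \<noteq> Zer \<or> principal_ext E C p C') \<longrightarrow>
            comodular E C (delp p X) (delp p Y))"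
proof -
  have dX: "delp p X \<in> C" and dY: "delp p Y \<in> C"
    using oldX oldY unfolding old_cocircuit_def by blast+
  have "g \<noteq> p" using prog single_elem_extD(1)[OF ext] unfolding om_program_def by blast
  then have gX: "delp p X g = Pos" and gY: "delp p Y g = Pos" using Xg Yg by (simp_all add: delp_def)
  then have "delp p X \<noteq> negv (delp p Y)" by (metis negsign.simps(1) negv_def sign.distinct(1))
  moreover have "delp p X \<noteq> delp p Y"
    using delp_neq_of_conformal[OF single_elem_extD(2)[OF ext] _ _ conf] oldX oldY comod
    unfolding old_cocircuit_def comodular_def by blast
  moreover have "is_edge E C (comp (delp p X) (delp p Y))"
    if "comp X Y p \<noteq> Zer \<or> principal_ext E C p C'"
    using is_edge_delp_comp[OF ext nontriv oldX oldY _ that] comod comp_delp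
    unfolding comodular_def by metis
  ultimately show ?thesis
    using dX dY gX gY conformal_delp[OF conf] unfolding comodular_def by blast
qed

end
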